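(* Let $f:[0,1]\to\mathbb{R}$ be a piecewise $C^1$, concave, non-negative function, let $a=\min\{\tau\in[0,1]: f(\tau)=\max_{[0,1]}f\}$, and assume $a>0$. Let $h>0$ and let $\gamma$ be the oriented curve $t\mapsto (y_1(t),y_2(t))=(1-t,\,f(1-t))$, $1-a\le t\le 1$ (running along the graph of $f$ from $(a,f(a))$ to $(0,f(0))$). Then for every $x_1\in[a/2,a]$, $$\int_\gamma\frac{y_1-x_1}{\left((y_1-x_1)^2+y_2^2+h^2\right)^{5/2}}\,dy_2>0,$$ equivalently $\int_0^a\frac{(t-x_1)f'(t)}{\left((t-x_1)^2+f(t)^2+h^2\right)^{5/2}}\,dt<0$. *)

theory Defs
  imports "HOL-Analysis.Analysis"
begin

end

theory Submission
  imports Defs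
begin

(* Write g(t) = (t - x1) f'(t) / ((t - x1)^2 + f(t)^2 + h^2)^(5/2) for the
   integrand of the second claim.  Since a is the first maximiser of the concave function f,
   f is strictly increasing on [0,a], f' > 0 on (0,a) and f' is non-increasing (all off the
   finite set where f fails to be C^1).  Put b = 2 x1 - a, so 0 <= b <= x1.  On [0,b] we have
   g <= 0 because t < x1.  The remaining interval [b,a] is folded about x1: the points
   x1 + s and x1 - s are at the same horizontal distance from x1, but f(x1 + s) > f(x1 - s) >= 0
   and f'(x1 + s) <= f'(x1 - s), so g(x1 + s) + g(x1 - s) < 0.  As a > 0, at least one of the
   two pieces is non-degenerate, which makes the integral of g strictly negative.  The first
   claim is the same integral after the substitution t -> 1 - t along the reflected curve. *)

section \<open>Sign of an integral from the sign of the integrand\<close>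

lemma integral_nonpos_off_finite:
  fixes \<psi> :: "real \<Rightarrow> real"
  assumes "\<psi> integrable_on {c..d}" "finite T" "\<And>t. t \<in> {c..d} - T \<Longrightarrow> \<psi> t \<le> 0"
  shows "integral {c..d} \<psi> \<le> 0"
proof -
  define \<psi>' where "\<psi>' = (\<lambda>t. if t \<in> T then 0 else \<psi> t)"
  have eq: "integral {c..d} \<psi> = integral {c..d} \<psi>'"
    by (rule integral_spike[OF negligible_finite[OF assms(2)]]) (auto simp: \<psi>'_def)
  have "\<psi>' integrable_on {c..d}"
    by (rule integrable_spike_finite[OF assms(2) _ assms(1)]) (auto simp: \<psi>'_def)
  then have "integral {c..d} \<psi>' \<le> integral {c..d} (\<lambda>_. 0::real)"
    by (rule integral_le) (use assms(3) in \<open>auto simp: \<psi>'_def\<close>)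
  then show ?thesis using eq by simp
qed

(* A non-degenerate interval contains a non-degenerate closed subinterval missing a given
   finite set; strict negativity of an integral is witnessed on such a subinterval. *)
lemma subinterval_avoiding_finite:
  fixes c d :: real
  assumes "c < d" "finite T"
  obtains c' d' where "c < c'" "c' < d'" "d' < d" "{c'..d'} \<inter> T = {}"
proof -
  define M where "M = (T \<inter> {c<..<d}) \<union> {d}"
  have M: "finite M" "M \<noteq> {}" using assms by (auto simp: M_def)
  define m where "m = Min M"
  have m: "c < m" "m \<le> d" using Min_in[OF M] assms(1) by (auto simp: M_def m_def)
  have below: "t \<notin> T" if "c < t" "t < m" for t
    using that m Min_le[OF M(1), of t] by (auto simp: M_def m_def)
  show ?thesis
  proof
    show "{c + (m - c)/3..c + 2*(m - c)/3} \<inter> T = {}"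
      using below m by (force simp: field_simps)
  qed (use m in \<open>auto simp: field_simps\<close>)
qed

lemma integral_neg_off_finite:
  fixes \<psi> :: "real \<Rightarrow> real"
  assumes int: "\<psi> integrable_on {c..d}" and cd: "c < d" and T: "finite T"
    and neg: "\<And>t. t \<in> {c..d} - T \<Longrightarrow> \<psi> t < 0"
    and cont: "continuous_on ({c..d} - T) \<psi>"
  shows "integral {c..d} \<psi> < 0"
proof -
  obtain c' d' where cd': "c < c'" "c' < d'" "d' < d" "{c'..d'} \<inter> T = {}"
    using subinterval_avoiding_finite[OF cd T] by blast
  have sub: "{c'..d'} \<subseteq> {c..d} - T" using cd' by auto
  have "integral {c'..d'} \<psi> < integral {c'..d'} (\<lambda>_. 0)"
  proof (rule integral_less_real)
    fix t assume "t \<in> {c'<..<d'}"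
    then have "t \<in> {c'..d'}" by simp
    then have "t \<in> {c..d} - T" using sub by blast
    then show "\<psi> t < 0" by (rule neg)
  qed (use cd' sub in \<open>auto intro: continuous_on_subset[OF cont]\<close>)
  then have middle: "integral {c'..d'} \<psi> < 0" by simp
  have left: "integral {c..c'} \<psi> \<le> 0" and right: "integral {d'..d} \<psi> \<le> 0"
    by (rule integral_nonpos_off_finite[OF _ T];
        use int cd' neg in \<open>auto intro: integrable_subinterval_real less_imp_le\<close>)+
  have "integral {c..d} \<psi> = integral {c..c'} \<psi> + integral {c'..d'} \<psi> + integral {d'..d} \<psi>"
    using Henstock_Kurzweil_Integration.integral_combine[OF _ _ int, of c']
      Henstock_Kurzweil_Integration.integral_combine[of c' d' d \<psi>]
      integrable_subinterval_real[OF int, of c' d] cd' by simp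
  then show ?thesis using left middle right by linarith
qed

lemma integral_sign_off_finite:
  fixes \<psi> :: "real \<Rightarrow> real"
  assumes int: "\<psi> integrable_on {c..d}" and T: "finite T"
    and neg: "\<And>t. t \<in> {c..d} - T \<Longrightarrow> \<psi> t < 0"
    and cont: "continuous_on ({c..d} - T) \<psi>"
  shows "integral {c..d} \<psi> \<le> 0" and "c < d \<Longrightarrow> integral {c..d} \<psi> < 0"
  using integral_nonpos_off_finite[OF int T] integral_neg_off_finite[OF int _ T neg cont] neg
  by (auto intro: less_imp_le)

section \<open>Reflection and folding of integrals\<close>

lemma has_integral_reflect_about:
  fixes \<phi> :: "real \<Rightarrow> real"
  assumes "(\<phi> has_integral i) {c..d}" "c \<le> d"
  shows "((\<lambda>u. \<phi> (p - u)) has_integral i) {p - d..p - c}"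
proof -
  have "((\<lambda>u. \<phi> ((-1) *\<^sub>R u + p)) has_integral (1 / (\<bar>-1\<bar> ^ DIM(real))) *\<^sub>R i)
      ((\<lambda>u. (1 / (-1)) *\<^sub>R u + -((1 / (-1)) *\<^sub>R p)) ` cbox c d)"
    by (rule has_integral_affinity) (use assms in auto)
  moreover have "(\<lambda>u. (1 / (-1)) *\<^sub>R u + -((1 / (-1)) *\<^sub>R p)) ` cbox c d = {p - d..p - c}"
    using image_affinity_atLeastAtMost[of "-1" p c d] assms(2) by (simp add: algebra_simps)
  ultimately show ?thesis by (simp add: algebra_simps)
qed

lemma integral_fold_about:
  fixes g :: "real \<Rightarrow> real"
  assumes g: "g integrable_on {2*x - a..a}" and "x \<le> a"
  shows "integral {2*x - a..a} g = integral {x..a} (\<lambda>u. g u + g (2*x - u))"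
proof -
  have "(g has_integral integral {2*x - a..x} g) {2*x - a..x}"
    using integrable_subinterval_real[OF g, of "2*x - a" x] assms(2) by (simp add: integrable_integral)
  from has_integral_reflect_about[OF this, of "2*x"]
  have mirror: "((\<lambda>u. g (2*x - u)) has_integral integral {2*x - a..x} g) {x..a}"
    using assms(2) by simp
  have right: "g integrable_on {x..a}"
    by (rule integrable_subinterval_real[OF g]) (use assms(2) in auto)
  have "integral {2*x - a..a} g = integral {2*x - a..x} g + integral {x..a} g"
    by (rule Henstock_Kurzweil_Integration.integral_combine[OF _ _ g, symmetric]) (use assms(2) in auto)
  then show ?thesis
    using integral_add[OF right has_integral_integrable[OF mirror]] integral_unique[OF mirror] by simp
qed

lemma deriv_reflect:
  assumes "(f has_real_derivative D) (at (p - t))"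
  shows "deriv (\<lambda>s. f (p - s)) t = - D"
proof -
  have "((\<lambda>s. p - s) has_real_derivative -1) (at t)"
    by (auto intro!: derivative_eq_intros)
  from DERIV_chain2[OF assms this] show ?thesis
    by (intro DERIV_imp_deriv) simp
qed

section \<open>Consequences of concavity\<close>

lemma concave_on_below_tangent:
  fixes f :: "real \<Rightarrow> real"
  assumes "concave_on A f" "connected A" "c \<in> interior A" "x \<in> A"
    and "(f has_real_derivative D) (at c)"
  shows "f x - f c \<le> D * (x - c)"
proof -
  have convex: "convex_on A (\<lambda>x. - f x)" using assms(1) by (simp add: concave_on_def)
  have "((\<lambda>x. - f x) has_real_derivative - D) (at c within A)"
    using assms(5) by (auto intro: DERIV_minus has_field_derivative_at_within)
  from convex_on_imp_above_tangent[OF convex assms(2-4) this]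
  have "(- f x) - (- f c) \<ge> (- D) * (x - c)" .
  then show ?thesis by (simp add: algebra_simps)
qed

lemma concave_on_deriv_antimono:
  fixes f :: "real \<Rightarrow> real"
  assumes "concave_on A f" "connected A" "c \<in> interior A" "d \<in> interior A" "c < d"
    and "(f has_real_derivative Dc) (at c)" "(f has_real_derivative Dd) (at d)"
  shows "Dd \<le> Dc"
proof -
  have "f d - f c \<le> Dc * (d - c)" "f c - f d \<le> Dd * (c - d)"
    using concave_on_below_tangent[OF assms(1,2)] assms(3,4,6,7) interior_subset by blast+
  then have "Dd * (d - c) \<le> Dc * (d - c)" by (simp add: algebra_simps)
  then show ?thesis using assms(5) by simp
qed

lemma concave_on_deriv_pos_below:
  fixes f :: "real \<Rightarrow> real"
  assumes "concave_on A f" "connected A" "c \<in> interior A" "a \<in> A" "c < a" "f c < f a"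
    and "(f has_real_derivative D) (at c)"
  shows "D > 0"
proof -
  have "f a - f c \<le> D * (a - c)" by (rule concave_on_below_tangent) (use assms in auto)
  then have "0 < D * (a - c)" using assms(6) by linarith
  then show ?thesis using assms(5) by (simp add: zero_less_mult_iff)
qed

lemma concave_on_above_left_value:
  fixes f :: "real \<Rightarrow> real"
  assumes conc: "concave_on A f" and "s \<in> A" "a \<in> A" "f s < f a" "s < t" "t \<le> a"
  shows "f s < f t"
proof -
  define l where "l = (t - s) / (a - s)"
  have l: "0 < l" "l \<le> 1" using assms(5,6) by (auto simp: l_def field_simps)
  have "l * (a - s) = t - s" using assms(5,6) by (simp add: l_def)
  then have "(1 - l) *\<^sub>R s + l *\<^sub>R a = t" by (simp add: algebra_simps)
  moreover have "f ((1 - l) *\<^sub>R s + l *\<^sub>R a) \<ge> (1 - l) * f s + l * f a"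
    using concave_onD[OF conc, of l s a] l assms(2,3) by auto
  ultimately have "f t \<ge> f s + l * (f a - f s)" by (simp add: algebra_simps)
  moreover have "l * (f a - f s) > 0" using l assms(4) by simp
  ultimately show ?thesis by linarith
qed

lemma concave_on_rise_to_max:
  fixes f f' :: "real \<Rightarrow> real"
  assumes conc: "concave_on {c..d} f" and a: "a \<in> {c..d}"
    and below: "\<And>s. c \<le> s \<Longrightarrow> s < a \<Longrightarrow> f s < f a"
    and deriv: "\<And>x. x \<in> {c<..<d} - S \<Longrightarrow> (f has_real_derivative f' x) (at x)"
  shows "\<And>s t. c \<le> s \<Longrightarrow> s < t \<Longrightarrow> t \<le> a \<Longrightarrow> f s < f t"
    and "\<And>t. t \<in> {c<..<a} - S \<Longrightarrow> f' t > 0"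
    and "\<And>s t. s \<in> {c<..<a} - S \<Longrightarrow> t \<in> {c<..<a} - S \<Longrightarrow> s < t \<Longrightarrow> f' t \<le> f' s"
proof -
  show "f s < f t" if "c \<le> s" "s < t" "t \<le> a" for s t
    by (rule concave_on_above_left_value[OF conc]) (use that a below in auto)
  show "f' t > 0" if "t \<in> {c<..<a} - S" for t
    by (rule concave_on_deriv_pos_below[OF conc _ _ _ _ _ deriv[of t], where a = a])
       (use that a below in auto)
  show "f' t \<le> f' s" if "s \<in> {c<..<a} - S" "t \<in> {c<..<a} - S" "s < t" for s t
    by (rule concave_on_deriv_antimono[OF conc _ _ _ _ deriv[of s] deriv[of t]]) (use that a in auto)
qed

lemma piecewise_C1_derivative:
  fixes f :: "real \<Rightarrow> real"
  assumes "f piecewise_C1_differentiable_on I"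
  obtains S where "finite S" "continuous_on I f"
    "\<And>x. x \<in> I - S \<Longrightarrow> (f has_real_derivative deriv f x) (at x)"
    "continuous_on (I - S) (deriv f)"
proof -
  from assms obtain S where S: "finite S" "f C1_differentiable_on (I - S)" "continuous_on I f"
    unfolding piecewise_C1_differentiable_on_def by blast
  have D: "(f has_real_derivative deriv f x) (at x)" if "x \<in> I - S" for x
    using S(2) that by (simp add: C1_differentiable_on_eq DERIV_deriv_iff_real_differentiable)
  have "continuous_on (I - S) (\<lambda>x. vector_derivative f (at x))"
    using S(2) by (simp add: C1_differentiable_on_eq)
  moreover have "vector_derivative f (at x) = deriv f x" if "x \<in> I - S" for x
    using D[OF that] by (metis has_real_derivative_iff_has_vector_derivative vector_derivative_at)
  ultimately have "continuous_on (I - S) (deriv f)" using continuous_on_eq by blast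
  with S D show ?thesis using that by blast
qed

section \<open>The kernel\<close>

definition slope_kernel :: "real \<Rightarrow> real \<Rightarrow> (real \<Rightarrow> real) \<Rightarrow> (real \<Rightarrow> real) \<Rightarrow> real \<Rightarrow> real"
  where "slope_kernel x1 h f f' t = (t - x1) * f' t / ((t - x1)\<^sup>2 + (f t)\<^sup>2 + h\<^sup>2) powr (5/2)"

lemma kernel_denominator_pos:
  fixes h :: real
  assumes "h \<noteq> 0"
  shows "((t - x1)\<^sup>2 + y\<^sup>2 + h\<^sup>2) powr (5/2) > 0"
proof -
  have "0 < h\<^sup>2" using assms by simp
  then have "0 < (t - x1)\<^sup>2 + y\<^sup>2 + h\<^sup>2" by (simp add: add_nonneg_pos)
  then show ?thesis by simp
qed

lemma slope_kernel_pair_neg: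
  fixes f f' :: "real \<Rightarrow> real"
  assumes s: "s > 0" and h: "h \<noteq> 0"
    and slope: "f' (x1 + s) \<le> f' (x1 - s)" "f' (x1 - s) > 0"
    and height: "0 \<le> f (x1 - s)" "f (x1 - s) < f (x1 + s)"
  shows "slope_kernel x1 h f f' (x1 + s) + slope_kernel x1 h f f' (x1 - s) < 0"
proof -
  define Qu where "Qu = (s\<^sup>2 + (f (x1 + s))\<^sup>2 + h\<^sup>2) powr (5/2)"
  define Qv where "Qv = (s\<^sup>2 + (f (x1 - s))\<^sup>2 + h\<^sup>2) powr (5/2)"
  have Qv: "Qv > 0" using kernel_denominator_pos[OF h, of s 0 "f (x1 - s)"] by (simp add: Qv_def)
  have "(f (x1 - s))\<^sup>2 < (f (x1 + s))\<^sup>2" using height by (simp add: power_strict_mono)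
  then have QvQu: "Qv < Qu"
    unfolding Qu_def Qv_def using h by (intro powr_less_mono2) (auto simp: add_nonneg_pos)
  have "f' (x1 + s) / Qu \<le> f' (x1 - s) / Qu" using slope(1) Qv QvQu by (simp add: divide_right_mono)
  also have "\<dots> < f' (x1 - s) / Qv" using QvQu Qv slope(2) by (intro divide_strict_left_mono) auto
  finally have "s * (f' (x1 + s) / Qu - f' (x1 - s) / Qv) < 0" using s by (simp add: mult_pos_neg)
  then show ?thesis by (simp add: slope_kernel_def Qu_def Qv_def algebra_simps)
qed

lemma integrable_continuous_times_nonneg:
  fixes k \<psi> :: "real \<Rightarrow> real"
  assumes k: "continuous_on {c..d} k" and \<psi>: "\<psi> integrable_on {c..d}"
    and T: "finite T" and nonneg: "\<And>t. t \<in> {c..d} - T \<Longrightarrow> \<psi> t \<ge> 0"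
  shows "(\<lambda>t. k t * \<psi> t) integrable_on {c..d}"
proof -
  define \<psi>' where "\<psi>' t = (if t \<in> T then 0 else \<psi> t)" for t
  have "\<psi>' integrable_on {c..d}"
    using integrable_spike_finite[OF T _ \<psi>, of \<psi>'] by (auto simp: \<psi>'_def)
  then have "\<psi>' absolutely_integrable_on {c..d}"
    by (rule nonnegative_absolutely_integrable_1) (use nonneg in \<open>auto simp: \<psi>'_def\<close>)
  then have "(\<lambda>t. k t * \<psi>' t) absolutely_integrable_on {c..d}"
    by (intro absolutely_integrable_bounded_measurable_product_real
          continuous_imp_measurable_on_sets_lebesgue[OF k]
          compact_imp_bounded[OF compact_continuous_image[OF k]]) auto
  from integrable_spike_finite[OF T _ set_lebesgue_integral_eq_integral(1)[OF this]]
  show ?thesis by (auto simp: \<psi>'_def)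
qed

(* The kernel is integrable as soon as f is continuous with a non-negative derivative off a
   finite set: the slope f' is then integrable by the fundamental theorem of calculus, and the
   remaining factor is continuous. *)
lemma slope_kernel_integrable:
  fixes f f' :: "real \<Rightarrow> real"
  assumes S: "finite S" and cd: "c \<le> d" and h: "h \<noteq> 0"
    and cont: "continuous_on {c..d} f"
    and deriv: "\<And>t. t \<in> {c<..<d} - S \<Longrightarrow> (f has_real_derivative f' t) (at t)"
    and nonneg: "\<And>t. t \<in> {c<..<d} - S \<Longrightarrow> f' t \<ge> 0"
  shows "slope_kernel x1 h f f' integrable_on {c..d}"
proof -
  have "(f' has_integral (f d - f c)) {c..d}"
    by (rule fundamental_theorem_of_calculus_interior_strong[OF S cd _ cont])
       (use deriv in \<open>auto simp: has_real_derivative_iff_has_vector_derivative\<close>)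
  then have "(\<lambda>t. (t - x1) / ((t - x1)\<^sup>2 + (f t)\<^sup>2 + h\<^sup>2) powr (5/2) * f' t) integrable_on {c..d}"
    using kernel_denominator_pos[OF h] nonneg S
    by (intro integrable_continuous_times_nonneg[where T = "S \<union> {c, d}"] has_integral_integrable)
       (auto intro!: continuous_intros cont simp: less_imp_neq[symmetric])
  then show ?thesis by (simp add: slope_kernel_def[abs_def])
qed

lemma slope_kernel_folded_integral:
  fixes f f' :: "real \<Rightarrow> real" and x1 h :: real
  defines "g \<equiv> slope_kernel x1 h f f'"
  assumes S: "finite S" and h: "h \<noteq> 0" and x1_bounds: "0 \<le> 2*x1 - a" "x1 \<le> a"
    and int: "g integrable_on {2*x1 - a..a}"
    and cont: "continuous_on ({0<..<a} - S) g"
    and pos: "\<And>t. t \<in> {0<..<a} - S \<Longrightarrow> f' t > 0"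
    and antimono: "\<And>s t. s \<in> {0<..<a} - S \<Longrightarrow> t \<in> {0<..<a} - S \<Longrightarrow> s < t \<Longrightarrow> f' t \<le> f' s"
    and incr: "\<And>s t. 0 \<le> s \<Longrightarrow> s < t \<Longrightarrow> t \<le> a \<Longrightarrow> f s < f t"
    and nonneg: "\<And>t. t \<in> {0..a} \<Longrightarrow> f t \<ge> 0"
  shows "integral {x1..a} (\<lambda>u. g u + g (2*x1 - u)) \<le> 0"
    and "x1 < a \<Longrightarrow> integral {x1..a} (\<lambda>u. g u + g (2*x1 - u)) < 0"
proof -
  define mirror where "mirror u = 2*x1 - u" for u
  define T where "T = S \<union> mirror ` S \<union> {x1, a}"
  have T: "finite T" using S by (simp add: T_def)
  have mirror_in: "mirror u \<in> {0<..<a} - S" if u: "u \<in> {x1..a} - T" for u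
  proof -
    have "mirror (mirror u) = u" by (simp add: mirror_def)
    then have "mirror u \<notin> S" using u rev_image_eqI[of "mirror u" S u mirror] by (auto simp: T_def)
    then show ?thesis using u x1_bounds by (auto simp: T_def mirror_def)
  qed
  have neg: "g u + g (mirror u) < 0" if u: "u \<in> {x1..a} - T" for u
  proof -
    have "u \<in> {0<..<a} - S" "mirror u < u" using u x1_bounds by (auto simp: T_def mirror_def)
    then show ?thesis
      using slope_kernel_pair_neg[of "u - x1" h f' x1 f] mirror_in[OF u] antimono pos incr nonneg h
      by (auto simp: g_def mirror_def T_def)
  qed
  have fold_cont: "continuous_on ({x1..a} - T) (\<lambda>u. g u + g (mirror u))"
  proof (intro continuous_on_add continuous_on_compose2[OF cont, of _ mirror])
    show "continuous_on ({x1..a} - T) g"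
      by (rule continuous_on_subset[OF cont]) (use x1_bounds in \<open>auto simp: T_def\<close>)
  qed (use mirror_in in \<open>auto simp: mirror_def intro!: continuous_intros\<close>)
  have "g integrable_on {2*x1 - a..x1}" by (rule integrable_subinterval_real[OF int]) (use x1_bounds in auto)
  from has_integral_reflect_about[OF integrable_integral[OF this], of "2*x1"]
  have "(\<lambda>u. g (mirror u)) integrable_on {x1..a}" using x1_bounds by (auto simp: mirror_def)
  then have fold_int: "(\<lambda>u. g u + g (mirror u)) integrable_on {x1..a}"
    using integrable_subinterval_real[OF int, of x1 a] x1_bounds by (intro integrable_add) auto
  from integral_sign_off_finite[OF fold_int T neg fold_cont]
  show "integral {x1..a} (\<lambda>u. g u + g (2*x1 - u)) \<le> 0"
    and "x1 < a \<Longrightarrow> integral {x1..a} (\<lambda>u. g u + g (2*x1 - u)) < 0"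
    by (simp_all add: mirror_def)
qed

(* The interval splits at
   b = 2 x1 - a into [0,b], where the kernel is negative since t < x1, and [b,a], which is
   folded about x1; as a > 0, one of the two pieces is non-degenerate. *)
lemma slope_kernel_integral_neg:
  fixes f f' :: "real \<Rightarrow> real"
  assumes S: "finite S" and a: "0 < a" and h: "h \<noteq> 0" and x1_bounds: "a/2 \<le> x1" "x1 \<le> a"
    and cont: "continuous_on {0..a} f"
    and deriv: "\<And>t. t \<in> {0<..<a} - S \<Longrightarrow> (f has_real_derivative f' t) (at t)"
    and cont': "continuous_on ({0<..<a} - S) f'"
    and pos: "\<And>t. t \<in> {0<..<a} - S \<Longrightarrow> f' t > 0"
    and antimono: "\<And>s t. s \<in> {0<..<a} - S \<Longrightarrow> t \<in> {0<..<a} - S \<Longrightarrow> s < t \<Longrightarrow> f' t \<le> f' s"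
    and incr: "\<And>s t. 0 \<le> s \<Longrightarrow> s < t \<Longrightarrow> t \<le> a \<Longrightarrow> f s < f t"
    and nonneg: "\<And>t. t \<in> {0..a} \<Longrightarrow> f t \<ge> 0"
  shows "integral {0..a} (slope_kernel x1 h f f') < 0"
proof -
  define g where "g = slope_kernel x1 h f f'"
  define b where "b = 2*x1 - a"
  have b: "0 \<le> b" "b \<le> x1" using x1_bounds by (auto simp: b_def)
  have int: "g integrable_on {0..a}"
    unfolding g_def by (rule slope_kernel_integrable[OF S _ h cont deriv]) (use a pos in \<open>auto intro: less_imp_le\<close>)
  have cont_g: "continuous_on ({0<..<a} - S) g"
    using cont kernel_denominator_pos[OF h] unfolding g_def slope_kernel_def[abs_def]
    by (auto intro!: continuous_intros cont' intro: continuous_on_subset simp: less_imp_neq[symmetric])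
  have "integral {0..a} g = integral {0..b} g + integral {b..a} g"
    by (rule Henstock_Kurzweil_Integration.integral_combine[OF _ _ int, symmetric]) (use b x1_bounds in auto)
  also have "integral {b..a} g = integral {x1..a} (\<lambda>u. g u + g (2*x1 - u))"
    unfolding b_def by (rule integral_fold_about) (use integrable_subinterval_real[OF int] b x1_bounds in \<open>auto simp: b_def\<close>)
  finally have split: "integral {0..a} g = integral {0..b} g + integral {x1..a} (\<lambda>u. g u + g (2*x1 - u))" .
  have left_neg: "g t < 0" if "t \<in> {0..b} - (S \<union> {0, b})" for t
    using that b pos[of t] x1_bounds kernel_denominator_pos[OF h]
    by (auto simp: g_def slope_kernel_def mult_neg_pos divide_neg_pos)
  have int_left: "g integrable_on {0..b}"
    by (rule integrable_subinterval_real[OF int]) (use b x1_bounds in auto)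
  have cont_left: "continuous_on ({0..b} - (S \<union> {0, b})) g"
    by (rule continuous_on_subset[OF cont_g]) (use b x1_bounds in auto)
  have left: "integral {0..b} g \<le> 0" "0 < b \<Longrightarrow> integral {0..b} g < 0"
    using integral_sign_off_finite[OF int_left _ left_neg cont_left] S by auto
  have int_fold: "slope_kernel x1 h f f' integrable_on {2*x1 - a..a}"
    using integrable_subinterval_real[OF int, of b a] b x1_bounds by (simp add: g_def b_def)
  have right: "integral {x1..a} (\<lambda>u. g u + g (2*x1 - u)) \<le> 0"
      "x1 < a \<Longrightarrow> integral {x1..a} (\<lambda>u. g u + g (2*x1 - u)) < 0"
    using slope_kernel_folded_integral[OF S h _ _ int_fold cont_g[unfolded g_def]]
      pos antimono incr nonneg b x1_bounds
    unfolding g_def b_def by auto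
  have "0 < b \<or> x1 < a" using a x1_bounds by (auto simp: b_def)
  then show ?thesis using split left right by (auto simp: g_def)
qed

(* The first integral of the theorem is the kernel integral seen along the reflected curve
   t \<mapsto> (1 - t, f (1 - t)); the reflection reverses orientation, hence the sign change. *)
lemma reflected_slope_kernel_integral:
  fixes f f' :: "real \<Rightarrow> real"
  assumes S: "finite S" and a: "0 \<le> a"
    and deriv: "\<And>t. t \<in> {0..a} - S \<Longrightarrow> (f has_real_derivative f' t) (at t)"
    and int: "slope_kernel x1 h f f' integrable_on {0..a}"
  shows "integral {1-a..1}
           (\<lambda>t. ((1 - t) - x1) / (((1 - t) - x1)\<^sup>2 + (f (1 - t))\<^sup>2 + h\<^sup>2) powr (5/2)
                 * deriv (\<lambda>s. f (1 - s)) t)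
         = - integral {0..a} (slope_kernel x1 h f f')"
proof -
  have reflected: "((\<lambda>u. - slope_kernel x1 h f f' (1 - u)) has_integral
      - integral {0..a} (slope_kernel x1 h f f')) {1-a..1}"
    using has_integral_reflect_about[OF integrable_integral[OF int] a, of 1] by (simp add: has_integral_neg)
  have integrand: "((1 - t) - x1) / (((1 - t) - x1)\<^sup>2 + (f (1 - t))\<^sup>2 + h\<^sup>2) powr (5/2)
                   * deriv (\<lambda>s. f (1 - s)) t = - slope_kernel x1 h f f' (1 - t)"
    if t: "t \<in> {1-a..1} - (\<lambda>s. 1 - s) ` S" for t
  proof -
    have "1 - t \<notin> S" using t rev_image_eqI[of "1 - t" S t "\<lambda>s. 1 - s"] by auto
    then have "1 - t \<in> {0..a} - S" using t by auto
    from deriv_reflect[OF deriv[OF this]] show ?thesis by (simp add: slope_kernel_def)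
  qed
  show ?thesis
    by (rule integral_unique[OF has_integral_spike_finite[OF finite_imageI[OF S] _ reflected]])
       (rule integrand)
qed

theorem lemma4p7:
  fixes f :: "real \<Rightarrow> real" and a h x1 :: real
  assumes pc1: "f piecewise_C1_differentiable_on {0..1}"
    and conc: "concave_on {0..1} f"
    and nonneg: "\<forall>t\<in>{0..1}. f t \<ge> 0"
    and a_in: "a \<in> {0..1}"
    and a_max: "\<forall>\<tau>\<in>{0..1}. f \<tau> \<le> f a"
    and a_min: "\<forall>\<tau>\<in>{0..1}. f \<tau> = f a \<longrightarrow> a \<le> \<tau>"
    and a_pos: "a > 0"
    and h_pos: "h > 0"
    and x1: "x1 \<in> {a/2..a}"
  shows "integral {1-a..1}
           (\<lambda>t. ((1 - t) - x1) / (((1 - t) - x1)\<^sup>2 + (f (1 - t))\<^sup>2 + h\<^sup>2) powr (5/2)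
                 * deriv (\<lambda>s. f (1 - s)) t) > 0
       \<and> integral {0..a}
           (\<lambda>t. (t - x1) * deriv f t / ((t - x1)\<^sup>2 + (f t)\<^sup>2 + h\<^sup>2) powr (5/2)) < 0"
proof -
  obtain S where S: "finite S" and cont: "continuous_on {0..1} f"
    and deriv: "\<And>x. x \<in> {0..1} - S \<Longrightarrow> (f has_real_derivative deriv f x) (at x)"
    and cont': "continuous_on ({0..1} - S) (deriv f)"
    using piecewise_C1_derivative[OF pc1] by blast
  have a: "0 < a" "a \<le> 1" and x1_bounds: "a/2 \<le> x1" "x1 \<le> a" and h: "h \<noteq> 0"
    using a_in a_pos x1 h_pos by auto
  have below_max: "f s < f a" if "0 \<le> s" "s < a" for s
  proof -
    have "s \<in> {0..1}" using that a by auto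
    then have "f s \<le> f a" "f s = f a \<longrightarrow> a \<le> s" using a_max a_min by auto
    then show ?thesis using that by auto
  qed
  have deriv_open: "(f has_real_derivative deriv f x) (at x)" if "x \<in> {0<..<1} - S" for x
    using deriv that by simp
  note rise = concave_on_rise_to_max[OF conc a_in below_max deriv_open]
  have cont_a: "continuous_on {0..a} f" by (rule continuous_on_subset[OF cont]) (use a in auto)
  have deriv_a: "(f has_real_derivative deriv f t) (at t)" if "t \<in> {0..a} - S" for t
    using deriv that a by auto
  have int: "slope_kernel x1 h f (deriv f) integrable_on {0..a}"
    by (rule slope_kernel_integrable[OF S _ h cont_a]) (use deriv_a rise(2) a in \<open>auto intro: less_imp_le\<close>)
  have neg: "integral {0..a} (slope_kernel x1 h f (deriv f)) < 0"
  proof (rule slope_kernel_integral_neg[OF S a(1) h x1_bounds cont_a _ _ rise(2,3,1)])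
    show "continuous_on ({0<..<a} - S) (deriv f)" by (rule continuous_on_subset[OF cont']) (use a in auto)
    show "(f has_real_derivative deriv f t) (at t)" if "t \<in> {0<..<a} - S" for t
      using deriv_a that by simp
    show "f t \<ge> 0" if "t \<in> {0..a}" for t using nonneg that a by simp
  qed
  have reflected: "integral {1-a..1}
           (\<lambda>t. ((1 - t) - x1) / (((1 - t) - x1)\<^sup>2 + (f (1 - t))\<^sup>2 + h\<^sup>2) powr (5/2)
                 * deriv (\<lambda>s. f (1 - s)) t) = - integral {0..a} (slope_kernel x1 h f (deriv f))"
    by (rule reflected_slope_kernel_integral[OF S _ deriv_a int]) (use a in simp)
  have "slope_kernel x1 h f (deriv f)
      = (\<lambda>t. (t - x1) * deriv f t / ((t - x1)\<^sup>2 + (f t)\<^sup>2 + h\<^sup>2) powr (5/2))"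
    by (simp add: fun_eq_iff slope_kernel_def)
  then show ?thesis using neg reflected by simp
qed

end
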